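(* Let $q$ be a prime power and let $\mathcal{F}\subseteq 2^{[n]}$ satisfy $|A\setminus B|\not\equiv 0\pmod q$ for all distinct $A,B\in\mathcal{F}$. Then $$|\mathcal{F}|\le\sum_{i=0}^{q-1}\binom{n-1}{i}.$$
   Context: $[n]=\{1,\ldots,n\}$ and $2^{[n]}$ is the family of all subsets of $[n]$. *)

theory Defs
  imports "HOL-Computational_Algebra.Primes"
begin

definition prime_power :: "nat \<Rightarrow> bool" where
  "prime_power q \<longleftrightarrow> (\<exists>p k. prime p \<and> k \<ge> 1 \<and> q = p ^ k)"

end

theory Submission
  imports Defs "HOL-Number_Theory.Cong" "Jordan_Normal_Form.Determinant"
begin

text \<open>
  Write \<open>q = p^k\<close> and \<open>r = q - 1\<close>. The alternating sum \<open>\<Sum>j\<le>r. (-1)^j (t choose j)\<close> equals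
  \<open>\<plusminus>(t - 1 choose r)\<close> for \<open>t > 0\<close>, which is divisible by \<open>p\<close> unless \<open>q\<close> divides \<open>t\<close>; for \<open>t = 0\<close> it is 1.
  Hence for \<open>A \<in> F\<close> the function \<open>f\<^sub>A(X)\<close> obtained by putting \<open>t = |A - X|\<close> satisfies
  \<open>f\<^sub>A(B) \<equiv> [A = B] (mod p)\<close> on \<open>F\<close>. By inclusion--exclusion every \<open>f\<^sub>A\<close> is an integer
  combination of the indicators \<open>[K \<subseteq> X]\<close> with \<open>|K| \<le> r\<close>, so the matrix \<open>(f\<^sub>A(B))\<close>, which is the identity
  modulo \<open>p\<close> and hence nonsingular, factors through that many columns. To reach subsets of \<open>[n-1]\<close> only,
  one evaluates at \<open>B - {n}\<close> and uses \<open>t = |(X \<inter> [n-1]) - A|\<close> instead when \<open>n \<in> A\<close>.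
\<close>

definition alt_choose_sum :: "nat \<Rightarrow> nat \<Rightarrow> int" where
  "alt_choose_sum r t = (\<Sum>j=0..r. (-1) ^ j * int (t choose j))"

lemma alt_choose_sum_0 [simp]: "alt_choose_sum r 0 = 1"
  by (induction r) (simp_all add: alt_choose_sum_def)

lemma alt_choose_sum_Suc: "alt_choose_sum r (Suc s) = (-1) ^ r * int (s choose r)"
proof (induction r)
  case 0
  then show ?case by (simp add: alt_choose_sum_def)
next
  case (Suc r)
  have "alt_choose_sum (Suc r) (Suc s) = alt_choose_sum r (Suc s) + (-1) ^ Suc r * int (Suc s choose Suc r)"
    by (simp add: alt_choose_sum_def)
  also have "\<dots> = (-1) ^ r * int (s choose r) + (-1) ^ Suc r * (int (s choose r) + int (s choose Suc r))"
    using Suc by simp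
  also have "\<dots> = (-1) ^ Suc r * int (s choose Suc r)"
    by (simp add: algebra_simps)
  finally show ?case .
qed

lemma prime_dvd_choose_pred_prime_power:
  assumes "prime p" and "\<not> p ^ k dvd Suc s"
  shows "p dvd s choose (p ^ k - 1)"
proof (rule ccontr)
  assume "\<not> p dvd s choose (p ^ k - 1)"
  then have "coprime (p ^ k) (s choose (p ^ k - 1))"
    using \<open>prime p\<close> by (simp add: prime_imp_coprime)
  moreover have "Suc s * (s choose (p ^ k - 1)) = (Suc s choose p ^ k) * p ^ k"
    using Suc_times_binomial_eq[of s "p ^ k - 1"] \<open>prime p\<close> by (simp add: prime_gt_0_nat)
  ultimately have "p ^ k dvd Suc s"
    by (metis coprime_dvd_mult_left_iff dvd_triv_right)
  with assms(2) show False ..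
qed

lemma prime_dvd_alt_choose_sum:
  assumes "prime p" and "\<not> p ^ k dvd t"
  shows "int p dvd alt_choose_sum (p ^ k - 1) t"
proof -
  obtain s where "t = Suc s"
    using assms(2) by (cases t) auto
  then show ?thesis
    using prime_dvd_choose_pred_prime_power[OF assms(1)] assms(2)
    by (simp add: alt_choose_sum_Suc)
qed

lemma det_cong:
  fixes A B :: "int mat"
  assumes A: "A \<in> carrier_mat m m" and B: "B \<in> carrier_mat m m"
    and entries: "\<And>i j. i < m \<Longrightarrow> j < m \<Longrightarrow> [A $$ (i, j) = B $$ (i, j)] (mod d)"
  shows "[det A = det B] (mod d)"
proof -
  have "[signof \<pi> * (\<Prod>i=0..<m. A $$ (i, \<pi> i)) = signof \<pi> * (\<Prod>i=0..<m. B $$ (i, \<pi> i))] (mod d)"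
    if \<pi>: "\<pi> permutes {0..<m}" for \<pi>
    using permutes_in_image[OF \<pi>] by (intro cong_mult cong_refl cong_prod entries) auto
  then show ?thesis
    unfolding det_def'[OF A] det_def'[OF B] by (intro cong_sum) auto
qed

lemma det_zero_row:
  assumes Q: "Q \<in> carrier_mat m m" and k: "k < m" and zero: "\<And>j. j < m \<Longrightarrow> Q $$ (k, j) = 0"
  shows "det Q = 0"
proof -
  have "Q = mat\<^sub>r m m (\<lambda>i. if i = k then 0\<^sub>v m else row Q i)"
    using Q zero by (intro eq_matI) auto
  also have "det \<dots> = 0"
    using Q by (intro det_row_0[OF k]) auto
  finally show ?thesis .
qed

lemma card_le_card_if_product_cong_delta:
  fixes a :: "'i \<Rightarrow> 'k \<Rightarrow> int" and b :: "'k \<Rightarrow> 'i \<Rightarrow> int"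
  assumes "finite I" and "finite K" and "\<not> is_unit d"
    and delta: "\<And>i l. i \<in> I \<Longrightarrow> l \<in> I \<Longrightarrow> [(\<Sum>\<kappa>\<in>K. a i \<kappa> * b \<kappa> l) = of_bool (i = l)] (mod d)"
  shows "card I \<le> card K"
proof (rule ccontr)
  define m where "m = card I"
  define k where "k = card K"
  assume "\<not> card I \<le> card K"
  then have "k < m" by (simp add: m_def k_def)
  obtain e where e: "bij_betw e {0..<m} I"
    using ex_bij_betw_nat_finite[OF \<open>finite I\<close>] m_def by blast
  obtain h where h: "bij_betw h {0..<k} K"
    using ex_bij_betw_nat_finite[OF \<open>finite K\<close>] k_def by blast
  define P where "P = mat m m (\<lambda>(i, j). if j < k then a (e i) (h j) else 0)"
  define Q where "Q = mat m m (\<lambda>(j, l). if j < k then b (h j) (e l) else 0)"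
  have P: "P \<in> carrier_mat m m" and Q: "Q \<in> carrier_mat m m"
    by (simp_all add: P_def Q_def)
  have PQ: "(P * Q) $$ (i, l) = (\<Sum>\<kappa>\<in>K. a (e i) \<kappa> * b \<kappa> (e l))" if "i < m" "l < m" for i l
  proof -
    have "(P * Q) $$ (i, l) = (\<Sum>j\<in>{0..<m}. P $$ (i, j) * Q $$ (j, l))"
      using that by (simp add: P_def Q_def scalar_prod_def)
    also have "\<dots> = (\<Sum>j\<in>{0..<k}. a (e i) (h j) * b (h j) (e l))"
      using \<open>k < m\<close> that by (intro sum.mono_neutral_cong_right) (auto simp: P_def Q_def)
    also have "\<dots> = (\<Sum>\<kappa>\<in>K. a (e i) \<kappa> * b \<kappa> (e l))"
      by (rule sum.reindex_bij_betw[OF h])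
    finally show ?thesis .
  qed
  have entries: "[(P * Q) $$ (i, l) = 1\<^sub>m m $$ (i, l)] (mod d)" if "i < m" "l < m" for i l
  proof -
    have "e i = e l \<longleftrightarrow> i = l"
      using e that by (auto simp: bij_betw_def inj_on_eq_iff)
    then show ?thesis
      using delta[of "e i" "e l"] bij_betwE[OF e] PQ that by (cases "i = l") auto
  qed
  have "det Q = 0"
    using \<open>k < m\<close> by (intro det_zero_row[OF Q]) (auto simp: Q_def)
  then have "det (P * Q) = 0"
    by (simp add: det_mult[OF P Q])
  moreover have "[det (P * Q) = det (1\<^sub>m m)] (mod d)"
    using entries by (intro det_cong[OF mult_carrier_mat[OF P Q]]) auto
  ultimately show False
    using \<open>\<not> is_unit d\<close> by (simp add: cong_sym_eq cong_0_iff)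
qed

definition incl_span :: "'a set set \<Rightarrow> ('a set \<Rightarrow> int) \<Rightarrow> bool" where
  "incl_span \<K> f \<longleftrightarrow> (\<exists>c. \<forall>X. f X = (\<Sum>K\<in>\<K>. c K * of_bool (K \<subseteq> X)))"

lemma incl_span_add:
  assumes "incl_span \<K> f" and "incl_span \<K> g"
  shows "incl_span \<K> (\<lambda>X. f X + g X)"
proof -
  obtain c d where "\<And>X. f X = (\<Sum>K\<in>\<K>. c K * of_bool (K \<subseteq> X))" "\<And>X. g X = (\<Sum>K\<in>\<K>. d K * of_bool (K \<subseteq> X))"
    using assms unfolding incl_span_def by blast
  then show ?thesis
    unfolding incl_span_def by (intro exI[of _ "\<lambda>K. c K + d K"]) (simp add: distrib_right sum.distrib)
qed

lemma incl_span_cmult: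
  assumes "incl_span \<K> f"
  shows "incl_span \<K> (\<lambda>X. a * f X)"
proof -
  obtain c where "\<And>X. f X = (\<Sum>K\<in>\<K>. c K * of_bool (K \<subseteq> X))"
    using assms unfolding incl_span_def by blast
  then show ?thesis
    unfolding incl_span_def by (intro exI[of _ "\<lambda>K. a * c K"]) (simp add: sum_distrib_left mult.assoc)
qed

lemma incl_span_sum:
  assumes "finite I" and "\<And>i. i \<in> I \<Longrightarrow> incl_span \<K> (f i)"
  shows "incl_span \<K> (\<lambda>X. \<Sum>i\<in>I. f i X)"
  using assms
proof (induction I rule: finite_induct)
  case empty
  show ?case
    unfolding incl_span_def by (intro exI[of _ "\<lambda>_. 0"]) simp
next
  case (insert i I)
  then show ?case
    using incl_span_add[of \<K> "f i" "\<lambda>X. \<Sum>i\<in>I. f i X"] by simp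
qed

lemma incl_span_subset_indicator:
  assumes "finite \<K>" and "J \<in> \<K>"
  shows "incl_span \<K> (\<lambda>X. of_bool (J \<subseteq> X))"
proof -
  have "(\<Sum>K\<in>\<K>. of_bool (K = J) * of_bool (K \<subseteq> X)) = (of_bool (J \<subseteq> X) :: int)" for X
  proof -
    have "(\<Sum>K\<in>\<K>. of_bool (K = J) * of_bool (K \<subseteq> X)) = (\<Sum>K\<in>\<K>. if K = J then of_bool (J \<subseteq> X) else 0 :: int)"
      by (rule sum.cong) auto
    also have "\<dots> = of_bool (J \<subseteq> X)"
      by (simp only: sum.delta[OF assms(1)] assms(2) if_True)
    finally show ?thesis .
  qed
  then show ?thesis
    unfolding incl_span_def by (intro exI[of _ "\<lambda>K. of_bool (K = J)"]) simp
qed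

lemma sum_Pow_alternating:
  assumes "finite S"
  shows "(\<Sum>T\<in>Pow S. (-1) ^ card T) = (of_bool (S = {}) :: 'a :: ring_1)"
proof (cases "S = {}")
  case False
  then have "card {T. T \<in> Pow S \<and> even (card T)} = card {T. T \<in> Pow S \<and> odd (card T)}"
    using assms card_subsupersets_even_odd[of S "{}"] by auto
  then show ?thesis
    using assms False sum_alternating_cancels[of "Pow S" card] by simp
qed simp

lemma disjoint_indicator_inclusion_exclusion:
  assumes "finite J"
  shows "of_bool (J \<inter> X = {}) = (\<Sum>T\<in>Pow J. (-1) ^ card T * of_bool (T \<subseteq> X) :: int)"
proof -
  have "(\<Sum>T\<in>Pow J. (-1) ^ card T * of_bool (T \<subseteq> X) :: int) = (\<Sum>T\<in>Pow (J \<inter> X). (-1) ^ card T)"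
    using assms by (intro sum.mono_neutral_cong_right) auto
  also have "\<dots> = of_bool (J \<inter> X = {})"
    using assms sum_Pow_alternating[of "J \<inter> X"] by simp
  finally show ?thesis ..
qed

lemma incl_span_disjoint_indicator:
  assumes "finite \<K>" and "finite J" and "Pow J \<subseteq> \<K>"
  shows "incl_span \<K> (\<lambda>X. of_bool (J \<inter> X = {}))"
  unfolding disjoint_indicator_inclusion_exclusion[OF \<open>finite J\<close>]
  using assms by (intro incl_span_sum incl_span_cmult incl_span_subset_indicator) auto

lemma int_card_choose_eq_sum_subsets:
  assumes "finite S" and "T \<subseteq> S"
  shows "int (card T choose j) = (\<Sum>J | J \<subseteq> S \<and> card J = j. of_bool (J \<subseteq> T))"
proof -
  have "{J. J \<subseteq> S \<and> card J = j \<and> J \<subseteq> T} = {J. J \<subseteq> T \<and> card J = j}"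
    using assms(2) by auto
  then have "card T choose j = card {J. J \<subseteq> S \<and> card J = j \<and> J \<subseteq> T}"
    using n_subsets[OF finite_subset[OF assms(2,1)]] by simp
  moreover have "{J. J \<subseteq> S \<and> card J = j} \<inter> {J. J \<subseteq> T} = {J. J \<subseteq> S \<and> card J = j \<and> J \<subseteq> T}"
    by auto
  moreover have "finite {J. J \<subseteq> S \<and> card J = j}"
    using assms(1) by simp
  ultimately show ?thesis
    by (simp only: sum_of_bool_eq)
qed

lemma incl_span_alt_choose_sum:
  assumes "finite S" and "\<And>X. T X \<subseteq> S"
    and "\<And>J. J \<subseteq> S \<Longrightarrow> card J \<le> r \<Longrightarrow> incl_span \<K> (\<lambda>X. of_bool (J \<subseteq> T X))"
  shows "incl_span \<K> (\<lambda>X. alt_choose_sum r (card (T X)))"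
proof -
  have "alt_choose_sum r (card (T X)) = (\<Sum>j=0..r. (-1) ^ j * (\<Sum>J | J \<subseteq> S \<and> card J = j. of_bool (J \<subseteq> T X)))" for X
    unfolding alt_choose_sum_def by (simp only: int_card_choose_eq_sum_subsets[OF assms(1,2)])
  moreover have "incl_span \<K> (\<lambda>X. \<Sum>j=0..r. (-1) ^ j * (\<Sum>J | J \<subseteq> S \<and> card J = j. of_bool (J \<subseteq> T X)))"
    using assms(1) by (intro incl_span_sum incl_span_cmult assms(3)) auto
  ultimately show ?thesis
    by simp
qed

lemma card_le_card_if_incl_span_cong_delta:
  fixes f :: "'b \<Rightarrow> 'a set \<Rightarrow> int" and x :: "'b \<Rightarrow> 'a set"
  assumes "finite F" and "finite \<K>" and "\<not> is_unit d"
    and "\<And>A. A \<in> F \<Longrightarrow> incl_span \<K> (f A)"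
    and delta: "\<And>A B. A \<in> F \<Longrightarrow> B \<in> F \<Longrightarrow> [f A (x B) = of_bool (A = B)] (mod d)"
  shows "card F \<le> card \<K>"
proof -
  obtain c where c: "\<And>A X. A \<in> F \<Longrightarrow> f A X = (\<Sum>K\<in>\<K>. c A K * of_bool (K \<subseteq> X))"
    using bchoice[of F "\<lambda>A c. \<forall>X. f A X = (\<Sum>K\<in>\<K>. c K * of_bool (K \<subseteq> X))"] assms(4)
    unfolding incl_span_def by blast
  show ?thesis
  proof (rule card_le_card_if_product_cong_delta[OF assms(1-3)])
    fix A B assume "A \<in> F" "B \<in> F"
    then show "[(\<Sum>K\<in>\<K>. c A K * of_bool (K \<subseteq> x B)) = of_bool (A = B)] (mod d)"
      using delta c by simp
  qed
qed

lemma card_subsets_card_le: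
  assumes "finite S"
  shows "card {K. K \<subseteq> S \<and> card K \<le> r} = (\<Sum>i=0..r. card S choose i)"
proof -
  have "{K. K \<subseteq> S \<and> card K \<le> r} = (\<Union>i\<in>{0..r}. {K. K \<subseteq> S \<and> card K = i})"
    by auto
  also have "card \<dots> = (\<Sum>i=0..r. card {K. K \<subseteq> S \<and> card K = i})"
    using assms by (intro card_UN_disjoint) auto
  finally show ?thesis
    using assms by (simp add: n_subsets)
qed

lemma atLeast1_atMost_Diff_upper: "{1..n} - {n} = {1..n - 1 :: nat}"
  by auto

definition test_fun :: "nat \<Rightarrow> nat \<Rightarrow> nat set \<Rightarrow> nat set \<Rightarrow> int" where
  "test_fun n r A X = alt_choose_sum r (card (if n \<in> A then X \<inter> ({1..n-1} - A) else A - X))"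

lemma test_fun_at:
  assumes "B \<subseteq> {1..n}"
  shows "test_fun n r A (B - {n}) = alt_choose_sum r (card (if n \<in> A then B - A else A - B))"
proof -
  have "n \<in> A \<Longrightarrow> (B - {n}) \<inter> ({1..n-1} - A) = B - A"
    using assms atLeast1_atMost_Diff_upper[of n] by blast
  moreover have "n \<notin> A \<Longrightarrow> A - (B - {n}) = A - B"
    by auto
  ultimately show ?thesis
    by (simp add: test_fun_def)
qed

lemma test_fun_incl_span:
  assumes "A \<subseteq> {1..n}"
  shows "incl_span {K. K \<subseteq> {1..n-1} \<and> card K \<le> r} (test_fun n r A)"
proof -
  let ?\<K> = "{K. K \<subseteq> {1..n-1} \<and> card K \<le> r}"
  have fin: "finite ?\<K>"
    by simp
  show ?thesis
  proof (cases "n \<in> A")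
    case True
    have "incl_span ?\<K> (\<lambda>X. alt_choose_sum r (card (X \<inter> ({1..n-1} - A))))"
    proof (rule incl_span_alt_choose_sum[where S = "{1..n-1} - A"])
      fix J assume "J \<subseteq> {1..n-1} - A" "card J \<le> r"
      then show "incl_span ?\<K> (\<lambda>X. of_bool (J \<subseteq> X \<inter> ({1..n-1} - A)))"
        using incl_span_subset_indicator[OF fin, of J] by auto
    qed auto
    with True show ?thesis
      unfolding test_fun_def by simp
  next
    case False
    then have A: "A \<subseteq> {1..n-1}"
      using assms atLeast1_atMost_Diff_upper[of n] by blast
    then have "finite A"
      by (rule finite_subset) simp
    have "incl_span ?\<K> (\<lambda>X. alt_choose_sum r (card (A - X)))"
    proof (rule incl_span_alt_choose_sum[where S = A])
      fix J assume J: "J \<subseteq> A" "card J \<le> r"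
      have "finite J"
        using J(1) \<open>finite A\<close> by (rule finite_subset)
      have "T \<in> ?\<K>" if "T \<subseteq> J" for T
      proof -
        have "card T \<le> r"
          using card_mono[OF \<open>finite J\<close> that] J(2) by simp
        then show ?thesis
          using that J(1) A by blast
      qed
      then have "Pow J \<subseteq> ?\<K>"
        by blast
      moreover have "J \<subseteq> A - X \<longleftrightarrow> J \<inter> X = {}" for X
        using J by auto
      ultimately show "incl_span ?\<K> (\<lambda>X. of_bool (J \<subseteq> A - X))"
        using incl_span_disjoint_indicator[OF fin \<open>finite J\<close>] by simp
    qed (use \<open>finite A\<close> in auto)
    with False show ?thesis
      unfolding test_fun_def by simp
  qed
qed

lemma test_fun_cong_delta:
  assumes "prime p" and "A \<subseteq> {1..n}" and "B \<subseteq> {1..n}"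
    and "A \<noteq> B \<Longrightarrow> \<not> p ^ k dvd card (A - B) \<and> \<not> p ^ k dvd card (B - A)"
  shows "[test_fun n (p ^ k - 1) A (B - {n}) = of_bool (A = B)] (mod int p)"
proof (cases "A = B")
  case False
  then have "int p dvd test_fun n (p ^ k - 1) A (B - {n})"
    using assms prime_dvd_alt_choose_sum[OF assms(1)] by (simp add: test_fun_at)
  with False show ?thesis
    by (simp add: cong_0_iff)
qed (simp add: test_fun_at[OF assms(3)])

theorem mainTheorem2:
  fixes q n :: nat and F :: "nat set set"
  assumes "prime_power q"
    and "F \<subseteq> Pow {1..n}"
    and "\<forall>A\<in>F. \<forall>B\<in>F. A \<noteq> B \<longrightarrow> \<not> (q dvd card (A - B))"
  shows "card F \<le> (\<Sum>i=0..q-1. (n - 1) choose i)"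
proof -
  obtain p k where p: "prime p" and q: "q = p ^ k"
    using assms(1) unfolding prime_power_def by blast
  let ?\<K> = "{K. K \<subseteq> {1..n-1} \<and> card K \<le> q - 1}"
  have "card F \<le> card ?\<K>"
  proof (rule card_le_card_if_incl_span_cong_delta)
    show "finite F"
      by (rule finite_subset[OF assms(2)]) simp
    show "\<not> is_unit (int p)"
      using prime_gt_1_nat[OF p] by simp
    show "incl_span ?\<K> (test_fun n (q - 1) A)" if "A \<in> F" for A
      using that assms(2) by (intro test_fun_incl_span) blast
    show "[test_fun n (q - 1) A (B - {n}) = of_bool (A = B)] (mod int p)" if "A \<in> F" "B \<in> F" for A B
      using that assms(2,3) unfolding q by (intro test_fun_cong_delta[OF p]) blast+
  qed simp
  then show ?thesis
    by (simp add: card_subsets_card_le)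
qed

end
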